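(* Let $n$ training samples carry labels in $\{1,\dots,K\}$ with indicator matrix $F\in\mathbb{R}^{K\times n}$, with $n_k=n/K$ samples in each class $k$. Let the basis $G_1,\dots,G_r$ ($r\le n$) be a subset of the training samples with $r_k=r/K$ basis vectors in each class $k$, and let $F_{G_i}$ be the class indicator of $G_i$. Let $W\in\mathbb{R}^{r\times n}$ be entrywise nonnegative with positive column sums, $S=\operatorname{diag}(\mathbf{1}^TW)$, $\tilde W=WS^{-1}$ of full row rank, $X^*=F\tilde W^T(\tilde W\tilde W^T)^{-1}$, $F\tilde W^T\ne0$, and spectral risk $\gamma=\|X^*\|_F^2\|\tilde W\|_F^2/\|X^*\tilde W\|_F^2$. If $W_{ij}=0$ whenever $F_{G_i}\neq F_j$, then $K\le\gamma\le r$.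
   Context: The columns of $F$ are standard basis vectors of $\mathbb{R}^K$: $F_j=e_k$ iff sample $j$ is in class $k$. $W_{ij}$ is the similarity between basis vector $G_i$ and training sample $j$. *)

theory Defs
  imports "HOL-Analysis.Analysis"
begin

definition indicator_matrix :: "('n \<Rightarrow> 'k) \<Rightarrow> real^'n^'k" where
  "indicator_matrix lab = (\<chi> k j. if lab j = k then 1 else 0)"

definition colsum_diag :: "real^'n^'r \<Rightarrow> real^'n^'n" where
  "colsum_diag W = (\<chi> i j. if i = j then (\<Sum>l\<in>UNIV. W $ l $ j) else 0)"

definition frob2 :: "real^'n^'m \<Rightarrow> real" where
  "frob2 A = (\<Sum>i\<in>UNIV. \<Sum>j\<in>UNIV. (A $ i $ j)^2)"

end

theory Submission
  imports Defs
begin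

text \<open>Normalising the columns of \<open>W\<close> makes \<open>W\<^sup>~ = W S\<^sup>-\<^sup>1\<close> column stochastic, and the
  class condition confines column \<open>j\<close> of \<open>W\<^sup>~\<close> to the \<open>r/K\<close> basis vectors of the class of
  sample \<open>j\<close>. Hence \<open>F = P W\<^sup>~\<close>, where \<open>P\<close> is the \<open>K \<times> r\<close> class indicator of the basis,
  and the least-squares solution is exactly \<open>X\<^sup>* = P\<close>. Since \<open>\<parallel>P\<parallel>\<^sub>F\<^sup>2 = r\<close> and
  \<open>\<parallel>F\<parallel>\<^sub>F\<^sup>2 = n\<close>, we get \<open>\<gamma> = r \<parallel>W\<^sup>~\<parallel>\<^sub>F\<^sup>2 / n\<close>. Every column of \<open>W\<^sup>~\<close> is a probability
  vector on at most \<open>r/K\<close> entries, so its squared norm lies between \<open>K/r\<close>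
  (Cauchy-Schwarz) and \<open>1\<close>, which gives \<open>K \<le> \<gamma> \<le> r\<close>.\<close>

lemma matrix_inv_unique:
  fixes A B :: "'a::semiring_1^'n^'n"
  assumes "A ** B = mat 1" "B ** A = mat 1"
  shows "matrix_inv A = B"
proof -
  have inv: "A ** matrix_inv A = mat 1 \<and> matrix_inv A ** A = mat 1"
    unfolding matrix_inv_def by (rule someI_ex) (use assms in blast)
  have "matrix_inv A = matrix_inv A ** (A ** B)"
    using assms by (simp add: matrix_mul_rid)
  also have "\<dots> = (matrix_inv A ** A) ** B"
    by (simp add: matrix_mul_assoc)
  also have "\<dots> = B"
    using inv by (simp add: matrix_mul_lid)
  finally show ?thesis .
qed

lemma matrix_mul_matrix_inv:
  fixes A :: "'a::semiring_1^'n^'n"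
  assumes "invertible A"
  shows "A ** matrix_inv A = mat 1"
  using assms matrix_inv_unique unfolding invertible_def by metis

lemma invertible_gram_full_row_rank:
  fixes A :: "real^'n^'r"
  assumes "rank A = CARD('r)"
  shows "invertible (A ** transpose A)"
proof -
  have inj: "inj ((*v) (transpose A))"
    using full_rank_injective[of "transpose A"] rank_transpose[of A] assms by simp
  have "x = 0" if "(A ** transpose A) *v x = 0" for x
  proof -
    have "inner (transpose A *v x) (transpose A *v x) = inner x ((A ** transpose A) *v x)"
      by (metis dot_lmul_matrix matrix_vector_mul_assoc transpose_transpose vector_transpose_matrix)
    then have "transpose A *v x = 0"
      using that by simp
    then show "x = 0"
      using inj by (metis injD matrix_vector_mult_0_right)
  qed
  then show ?thesis
    by (simp add: invertible_left_inverse matrix_left_invertible_ker)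
qed

lemma least_squares_exact_factor:
  fixes A :: "real^'n^'r" and P :: "real^'r^'k"
  assumes "rank A = CARD('r)"
  shows "(P ** A) ** transpose A ** matrix_inv (A ** transpose A) = P"
proof -
  have "(P ** A) ** transpose A ** matrix_inv (A ** transpose A)
        = P ** ((A ** transpose A) ** matrix_inv (A ** transpose A))"
    by (simp add: matrix_mul_assoc)
  then show ?thesis
    using matrix_mul_matrix_inv[OF invertible_gram_full_row_rank[OF assms]]
    by (simp add: matrix_mul_rid)
qed

lemma matrix_inv_colsum_diag:
  fixes W :: "real^'n^'r"
  assumes "\<And>j. (\<Sum>i\<in>UNIV. W $ i $ j) \<noteq> 0"
  shows "matrix_inv (colsum_diag W) = (\<chi> i j. if i = j then 1 / (\<Sum>l\<in>UNIV. W $ l $ j) else 0)"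
  by (rule matrix_inv_unique)
     (use assms in \<open>simp_all add: colsum_diag_def matrix_matrix_mult_def mat_def vec_eq_iff
                   if_distrib[where f="\<lambda>x. _ * x"] cong: if_cong\<close>)

lemma colsum_normalized_nth:
  fixes W :: "real^'n^'r"
  assumes "\<And>j. (\<Sum>i\<in>UNIV. W $ i $ j) \<noteq> 0"
  shows "(W ** matrix_inv (colsum_diag W)) $ i $ j = W $ i $ j / (\<Sum>l\<in>UNIV. W $ l $ j)"
  by (simp add: matrix_inv_colsum_diag[OF assms] matrix_matrix_mult_def
      if_distrib[where f="\<lambda>x. _ * x"] cong: if_cong)

lemma colsum_normalized_column_stochastic:
  fixes W :: "real^'n^'r"
  assumes "\<And>i j. W $ i $ j \<ge> 0" "\<And>j. (\<Sum>i\<in>UNIV. W $ i $ j) > 0"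
  shows "(W ** matrix_inv (colsum_diag W)) $ i $ j \<ge> 0"
    "(\<Sum>i\<in>UNIV. (W ** matrix_inv (colsum_diag W)) $ i $ j) = 1"
  using assms(1)[of i j] assms(2)[of j]
  by (simp_all add: colsum_normalized_nth[OF less_imp_neq[OF assms(2), symmetric]]
      flip: sum_divide_distrib)

lemma column_indicator_matrix_eq_iff:
  "column i (indicator_matrix lab) = column j (indicator_matrix lab) \<longleftrightarrow> lab i = lab j"
  by (auto simp: column_def indicator_matrix_def vec_eq_iff)

lemma frob2_by_columns: "frob2 A = (\<Sum>j\<in>UNIV. \<Sum>i\<in>UNIV. (A $ i $ j)^2)"
  unfolding frob2_def by (rule sum.swap)

lemma frob2_indicator_matrix: "frob2 (indicator_matrix lab) = real CARD('n)"
  for lab :: "'n::finite \<Rightarrow> 'k::finite"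
  by (simp add: frob2_by_columns indicator_matrix_def if_distrib[where f="\<lambda>x. x^2"] cong: if_cong)

lemma indicator_matrix_factor:
  fixes A :: "real^'n^'r" and lab :: "'n \<Rightarrow> 'k::finite" and lab' :: "'r \<Rightarrow> 'k"
  assumes colsum: "\<And>j. (\<Sum>i\<in>UNIV. A $ i $ j) = 1"
    and support: "\<And>i j. lab' i \<noteq> lab j \<Longrightarrow> A $ i $ j = 0"
  shows "indicator_matrix lab = indicator_matrix lab' ** A"
proof -
  have "(indicator_matrix lab' ** A) $ k $ j = (\<Sum>i\<in>UNIV. if lab j = k then A $ i $ j else 0)"
    for k j
    unfolding indicator_matrix_def matrix_matrix_mult_def
    by (auto intro!: sum.cong simp: support)
  then show ?thesis
    by (simp add: vec_eq_iff indicator_matrix_def colsum)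
qed

lemma sum_squares_le_square_sum:
  fixes a :: "'i \<Rightarrow> real"
  assumes "finite S" "\<And>i. i \<in> S \<Longrightarrow> a i \<ge> 0"
  shows "(\<Sum>i\<in>S. (a i)^2) \<le> (\<Sum>i\<in>S. a i)^2"
proof -
  have "(\<Sum>i\<in>S. (a i)^2) \<le> (\<Sum>i\<in>S. a i * (\<Sum>l\<in>S. a l))"
  proof (rule sum_mono)
    fix i assume "i \<in> S"
    then have "a i \<le> (\<Sum>l\<in>S. a l)"
      using assms by (intro member_le_sum) auto
    then show "(a i)^2 \<le> a i * (\<Sum>l\<in>S. a l)"
      using assms \<open>i \<in> S\<close> by (simp add: power2_eq_square mult_left_mono)
  qed
  also have "\<dots> = (\<Sum>i\<in>S. a i)^2"
    by (simp add: power2_eq_square sum_distrib_right)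
  finally show ?thesis .
qed

lemma one_le_card_support_mult_sum_squares:
  fixes a :: "'i::finite \<Rightarrow> real"
  assumes "(\<Sum>i\<in>UNIV. a i) = 1" "\<And>i. i \<notin> S \<Longrightarrow> a i = 0"
  shows "1 \<le> real (card S) * (\<Sum>i\<in>UNIV. (a i)^2)"
proof -
  have "(\<Sum>i\<in>UNIV. a i) = (\<Sum>i\<in>S. a i)" "(\<Sum>i\<in>UNIV. (a i)^2) = (\<Sum>i\<in>S. (a i)^2)"
    using assms(2) by (auto intro: sum.mono_neutral_right)
  then show ?thesis
    using sum_squared_le_sum_of_squares[of a S] assms(1) by (simp add: mult.commute)
qed

lemma frob2_column_stochastic_bounds:
  fixes A :: "real^'n^'r" and S :: "'n \<Rightarrow> 'r set"
  assumes nonneg: "\<And>i j. A $ i $ j \<ge> 0"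
    and colsum: "\<And>j. (\<Sum>i\<in>UNIV. A $ i $ j) = 1"
    and support: "\<And>i j. i \<notin> S j \<Longrightarrow> A $ i $ j = 0"
    and support_card: "\<And>j. real (card (S j)) = m"
  shows "real CARD('n) / m \<le> frob2 A" "frob2 A \<le> real CARD('n)"
proof -
  let ?q = "\<lambda>j. \<Sum>i\<in>UNIV. (A $ i $ j)^2"
  have "1 / m \<le> ?q j" for j
  proof -
    have "1 \<le> m * ?q j" "?q j \<ge> 0"
      using one_le_card_support_mult_sum_squares[of "\<lambda>i. A $ i $ j" "S j"]
      by (simp_all add: colsum support support_card sum_nonneg)
    moreover from this have "m > 0"
      using mult_nonpos_nonneg[of m "?q j"] by linarith
    ultimately show ?thesis
      by (simp add: divide_le_eq mult.commute)
  qed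
  then show "real CARD('n) / m \<le> frob2 A"
    using sum_mono[of UNIV "\<lambda>_. 1 / m" ?q] by (simp add: frob2_by_columns)
  have "?q j \<le> 1" for j
    using sum_squares_le_square_sum[of UNIV "\<lambda>i. A $ i $ j"] by (simp add: nonneg colsum)
  then show "frob2 A \<le> real CARD('n)"
    using sum_mono[of UNIV ?q "\<lambda>_. 1"] by (simp add: frob2_by_columns)
qed

theorem corollary1:
  fixes lab :: "'n::finite \<Rightarrow> 'k::finite"
    and b :: "'r::finite \<Rightarrow> 'n"
    and W :: "real^'n^'r"
  assumes class_size: "\<And>k. real (card {j. lab j = k}) = real CARD('n) / real CARD('k)"
    and basis_subset: "inj b"
    and basis_class_size: "\<And>k. real (card {i. lab (b i) = k}) = real CARD('r) / real CARD('k)"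
    and W_nonneg: "\<And>i j. W $ i $ j \<ge> 0"
    and W_colsum_pos: "\<And>j. (\<Sum>i\<in>UNIV. W $ i $ j) > 0"
    and full_row_rank: "rank (W ** matrix_inv (colsum_diag W)) = CARD('r)"
    and FWt_nonzero: "indicator_matrix lab ** transpose (W ** matrix_inv (colsum_diag W)) \<noteq> 0"
    and W_class: "\<And>i j. column (b i) (indicator_matrix lab) \<noteq> column j (indicator_matrix lab)
                          \<Longrightarrow> W $ i $ j = 0"
  shows "let F = indicator_matrix lab;
             Wt = W ** matrix_inv (colsum_diag W);
             X = F ** transpose Wt ** matrix_inv (Wt ** transpose Wt);
             \<gamma> = frob2 X * frob2 Wt / frob2 (X ** Wt)
         in real CARD('k) \<le> \<gamma> \<and> \<gamma> \<le> real CARD('r)"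
proof -
  define Wt where "Wt = W ** matrix_inv (colsum_diag W)"
  define P where "P = indicator_matrix (\<lambda>i. lab (b i))"
  have Wt_nonneg: "Wt $ i $ j \<ge> 0" and Wt_colsum: "(\<Sum>i\<in>UNIV. Wt $ i $ j) = 1" for i j
    unfolding Wt_def using W_nonneg W_colsum_pos by (rule colsum_normalized_column_stochastic)+
  have Wt_class: "Wt $ i $ j = 0" if "lab (b i) \<noteq> lab j" for i j
    using W_class[of i j] that W_colsum_pos
    by (simp add: Wt_def colsum_normalized_nth less_imp_neq[symmetric] column_indicator_matrix_eq_iff)
  have F_eq: "indicator_matrix lab = P ** Wt"
    unfolding P_def using Wt_colsum Wt_class by (rule indicator_matrix_factor)
  have X_eq: "indicator_matrix lab ** transpose Wt ** matrix_inv (Wt ** transpose Wt) = P"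
    unfolding F_eq using full_row_rank Wt_def least_squares_exact_factor by blast
  have bounds: "real CARD('n) / (real CARD('r) / real CARD('k)) \<le> frob2 Wt"
    "frob2 Wt \<le> real CARD('n)"
    using frob2_column_stochastic_bounds[of Wt "\<lambda>j. {i. lab (b i) = lab j}"]
    by (auto simp: Wt_nonneg Wt_colsum Wt_class basis_class_size)
  have "frob2 P * frob2 Wt / frob2 (P ** Wt) = real CARD('r) * frob2 Wt / real CARD('n)"
    unfolding F_eq[symmetric] by (simp add: P_def frob2_indicator_matrix)
  moreover have "real CARD('k) \<le> real CARD('r) * frob2 Wt / real CARD('n)"
    using bounds(1) by (simp add: field_simps)
  moreover have "real CARD('r) * frob2 Wt / real CARD('n) \<le> real CARD('r)"
    using bounds(2) by (simp add: field_simps)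
  ultimately show ?thesis
    unfolding Let_def Wt_def[symmetric] X_eq by simp
qed

end
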